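(* For any finite group $G$, the difference graph $\mathcal{D}(G)$ is Eulerian.
   Context: For a finite group $G$ with identity $e$: the intersection power graph $\mathcal{G}_I(G)$ has vertex set $G$, two distinct non-identity vertices $x,y$ being adjacent iff $\langle x\rangle\cap\langle y\rangle\neq\{e\}$, and $e$ being adjacent to every other vertex. The power graph $\mathcal{P}(G)$ has vertex set $G$, two distinct vertices being adjacent iff one is a power of the other. The difference graph $\mathcal{D}(G)$ is the graph on vertex set $G$ with edge set $E(\mathcal{G}_I(G))\setminus E(\mathcal{P}(G))$, with all isolated vertices removed. *)

theory Defs
  imports "HOL-Algebra.Algebra"
begin

definition ip_adj :: "('a, 'b) monoid_scheme \<Rightarrow> 'a \<Rightarrow> 'a \<Rightarrow> bool" where
  "ip_adj G x y \<longleftrightarrow> x \<in> carrier G \<and> y \<in> carrier G \<and> x \<noteq> y \<and>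
     (x = \<one>\<^bsub>G\<^esub> \<or> y = \<one>\<^bsub>G\<^esub> \<or>
      generate G {x} \<inter> generate G {y} \<noteq> {\<one>\<^bsub>G\<^esub>})"

definition pow_adj :: "('a, 'b) monoid_scheme \<Rightarrow> 'a \<Rightarrow> 'a \<Rightarrow> bool" where
  "pow_adj G x y \<longleftrightarrow> x \<in> carrier G \<and> y \<in> carrier G \<and> x \<noteq> y \<and>
     ((\<exists>n::nat. y = x [^]\<^bsub>G\<^esub> n) \<or> (\<exists>n::nat. x = y [^]\<^bsub>G\<^esub> n))"

definition diff_adj :: "('a, 'b) monoid_scheme \<Rightarrow> 'a \<Rightarrow> 'a \<Rightarrow> bool" where
  "diff_adj G x y \<longleftrightarrow> ip_adj G x y \<and> \<not> pow_adj G x y"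

definition diff_vertices :: "('a, 'b) monoid_scheme \<Rightarrow> 'a set" where
  "diff_vertices G = {x \<in> carrier G. \<exists>y. diff_adj G x y}"

definition eulerian :: "'a set \<Rightarrow> ('a \<Rightarrow> 'a \<Rightarrow> bool) \<Rightarrow> bool" where
  "eulerian V E \<longleftrightarrow> (\<forall>v\<in>V. even (card {u \<in> V. E v u}))"

end

theory Submission
  imports Defs "HOL-Library.Disjoint_Sets" "HOL-Library.Z2"
begin

text \<open>Inversion is a fixed-point-free involution on the neighbourhood of every vertex v of the
  difference graph: it preserves cyclic subgroups, and a self-inverse u generates only {1, u},
  so a nontrivial intersection of the cyclic subgroups of u and v would put u into the one of v.\<close>

lemma even_card_if_fixpoint_free_involution:
  assumes "\<And>x. x \<in> A \<Longrightarrow> h x \<in> A" "\<And>x. x \<in> A \<Longrightarrow> h (h x) = x"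
    and "\<And>x. x \<in> A \<Longrightarrow> h x \<noteq> x"
  shows "even (card A)"
proof -
  have "(\<Sum>x\<in>A. 1 :: bit) = 0"
    by (rule sum_involution_eq_0[where h = h]) (use assms in simp_all)
  then have "even (of_nat (card A) :: bit)"
    by simp
  then show ?thesis
    by (simp only: even_of_nat)
qed

lemma ip_adj_commute: "ip_adj G x y \<longleftrightarrow> ip_adj G y x"
  unfolding ip_adj_def by (auto simp: Int_commute)

lemma pow_adj_commute: "pow_adj G x y \<longleftrightarrow> pow_adj G y x"
  unfolding pow_adj_def by auto

lemma diff_adj_commute: "diff_adj G x y \<longleftrightarrow> diff_adj G y x"
  unfolding diff_adj_def ip_adj_commute[of G x y] pow_adj_commute[of G x y] ..

lemma diff_adj_carrier: "diff_adj G x y \<Longrightarrow> x \<in> carrier G \<and> y \<in> carrier G"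
  by (simp add: diff_adj_def ip_adj_def)

lemma neighbourhood_in_diff_vertices:
  "{u \<in> diff_vertices G. diff_adj G v u} = {u. diff_adj G v u}"
  unfolding diff_vertices_def using diff_adj_carrier diff_adj_commute by fast

context group
begin

lemma generate_singleton_inv:
  assumes "y \<in> carrier G"
  shows "generate G {inv y} = generate G {y}"
proof -
  have incl: "generate G {inv x} \<subseteq> generate G {x}" if "x \<in> carrier G" for x
    using that by (intro generate_subgroup_incl generate_is_subgroup)
      (auto intro: generate_m_inv_closed generate.incl)
  show ?thesis
    using incl[OF assms] incl[of "inv y"] assms by auto
qed

lemma generate_singleton_self_inverse:
  assumes "y \<in> carrier G" "inv y = y"
  shows "generate G {y} \<subseteq> {\<one>, y}"
proof (rule generate_subgroup_incl)
  have "y \<otimes> y = \<one>"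
    using assms by (metis r_inv)
  then show "subgroup {\<one>, y} G"
    using assms by (intro subgroupI) auto
qed simp

lemma pow_adj_iff_generate:
  assumes "finite (carrier G)"
  shows "pow_adj G x y \<longleftrightarrow> x \<in> carrier G \<and> y \<in> carrier G \<and> x \<noteq> y \<and>
    (y \<in> generate G {x} \<or> x \<in> generate G {y})"
  unfolding pow_adj_def using generate_pow_on_finite_carrier[OF assms] by blast

lemma diff_adj_iff_generate:
  assumes "finite (carrier G)"
  shows "diff_adj G x y \<longleftrightarrow> x \<in> carrier G \<and> y \<in> carrier G \<and> x \<noteq> \<one> \<and> y \<noteq> \<one> \<and>
    generate G {x} \<inter> generate G {y} \<noteq> {\<one>} \<and> y \<notin> generate G {x} \<and> x \<notin> generate G {y}"
proof -
  have "z \<in> generate G {z}" for z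
    by (rule generate.incl) simp
  then show ?thesis
    unfolding diff_adj_def ip_adj_def pow_adj_iff_generate[OF assms]
    using generate.one[of G] by auto
qed

lemma diff_adj_inv:
  assumes "finite (carrier G)" "diff_adj G v u"
  shows "diff_adj G v (inv u)"
proof -
  have u: "u \<in> carrier G" and v: "v \<in> carrier G"
    using diff_adj_carrier[OF assms(2)] by auto
  have "inv u \<in> generate G {v} \<longleftrightarrow> u \<in> generate G {v}"
    using u v generate_m_inv_closed[of "{v}"] by (metis empty_subsetI insert_subset inv_inv)
  moreover have "inv u \<noteq> \<one>" "inv u \<in> carrier G"
    using assms u by (auto simp: diff_adj_iff_generate)
  ultimately show ?thesis
    using assms(2) u unfolding diff_adj_iff_generate[OF assms(1)] generate_singleton_inv[OF u]
    by blast
qed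

lemma diff_adj_inv_neq:
  assumes "finite (carrier G)" "diff_adj G v u"
  shows "inv u \<noteq> u"
proof
  assume self_inverse: "inv u = u"
  from assms obtain z where z: "z \<in> generate G {v}" "z \<in> generate G {u}" "z \<noteq> \<one>"
    unfolding diff_adj_iff_generate[OF assms(1)] using generate.one by blast
  moreover have "generate G {u} \<subseteq> {\<one>, u}"
    using diff_adj_carrier[OF assms(2)] self_inverse by (intro generate_singleton_self_inverse) auto
  ultimately have "u \<in> generate G {v}"
    by auto
  then show False
    using assms by (simp add: diff_adj_iff_generate)
qed

lemma even_card_diff_adj_neighbourhood:
  assumes "finite (carrier G)"
  shows "even (card {u. diff_adj G v u})"
proof (rule even_card_if_fixpoint_free_involution[where h = "m_inv G"])
  fix u
  assume "u \<in> {u. diff_adj G v u}"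
  then have "diff_adj G v u" "u \<in> carrier G"
    by (auto dest: diff_adj_carrier)
  then show "inv u \<in> {u. diff_adj G v u}" "inv (inv u) = u" "inv u \<noteq> u"
    using diff_adj_inv[OF assms] diff_adj_inv_neq[OF assms] by auto
qed

end

theorem theorem7p7:
  fixes G :: "('a, 'b) monoid_scheme"
  assumes "group G" and "finite (carrier G)"
  shows "eulerian (diff_vertices G) (diff_adj G)"
  unfolding eulerian_def neighbourhood_in_diff_vertices
  using group.even_card_diff_adj_neighbourhood[OF assms] by blast

end
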